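(* For any $\varepsilon\in(0,1)$, the second-order coding rate for the biometrical identification problem satisfies \begin{align} L^*(\varepsilon)=\sqrt{\mathrm{V}}\Phi^{-1}(\varepsilon). \end{align}
   Context: Biometrical identification problem: $\mathcal{X},\mathcal{Y},\mathcal{Z}$ are finite alphabets; $M$ feature vectors $X^n(1),\ldots,X^n(M)$ are generated i.i.d. according to $P_X^n$; for each $m$, $Y^n(m)$ is the output of a DMC $P_{Y|X}$ with input $X^n(m)$ and is stored without compression. An index $W$ uniform on $\{1,\ldots,M\}$, independent of everything else, is drawn; the user observes $Z^n$, the output of a DMC $P_{Z|X}$ with input $X^n(W)$, and outputs $\hat{W}=g^{(n)}(Y^n(1),\ldots,Y^n(M),Z^n)$ for a deterministic decoding function $g^{(n)}$; the error probability is $\mathrm{P}_\mathrm{e}^{(n)}(g^{(n)})=\Pr\{\hat{W}\neq W\}$. Let $M^*(n,\varepsilon)$ be the maximum number of items such that $\min_{g^{(n)}}\mathrm{P}_\mathrm{e}^{(n)}(g^{(n)})\leq \varepsilon$, and $L^*(\varepsilon):=\liminf_{n\to\infty}\frac{1}{\sqrt{n}} \big(\log M^*(n,\varepsilon)-nI(P_Y,P_{Z|Y}) \big)$. Here $(Y,Z)\sim P_{YZ}$ induced by $P_X\times P_{Y|X}\times P_{Z|X}$, $\mathrm{V}:=\mathrm{Var}\left[\log\frac{P_{Z|Y}(Z|Y)}{P_Z(Z)}\right]>0$ is assumed, and $\Phi^{-1}$ is the inverse of the standard Gaussian cumulative distribution function. *)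

theory Defs
  imports "HOL-Probability.Probability"
begin

definition Phi :: "real \<Rightarrow> real" where
  "Phi = cdf (density lborel std_normal_density)"

definition Phi_inv :: "real \<Rightarrow> real" where
  "Phi_inv e = (THE t. Phi t = e)"

definition seqs :: "nat \<Rightarrow> 'a list set" where
  "seqs n = {xs. length xs = n}"

definition iid_prob :: "'a pmf \<Rightarrow> 'a list \<Rightarrow> real" where
  "iid_prob P xs = prod_list (map (pmf P) xs)"

definition dmc_prob :: "('a \<Rightarrow> 'b pmf) \<Rightarrow> 'a list \<Rightarrow> 'b list \<Rightarrow> real" where
  "dmc_prob W xs ys = prod_list (map2 (\<lambda>a b. pmf (W a) b) xs ys)"

text \<open>Items are indexed by 0..M-1. A decoder maps the stored database
  (Y^n(0),...,Y^n(M-1)) and the observation Z^n to an index.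
  Error probability Pr{g(Y^n(0..M-1), Z^n) != W} with W uniform on {0..<M}.\<close>
definition err_prob ::
  "'x pmf \<Rightarrow> ('x \<Rightarrow> 'y pmf) \<Rightarrow> ('x \<Rightarrow> 'z pmf) \<Rightarrow> nat \<Rightarrow> nat
    \<Rightarrow> ((nat \<Rightarrow> 'y list) \<Rightarrow> 'z list \<Rightarrow> nat) \<Rightarrow> real" where
  "err_prob PX PYX PZX n M g =
     (\<Sum>w<M. \<Sum>xs\<in>PiE {..<M} (\<lambda>_. seqs n). \<Sum>ys\<in>PiE {..<M} (\<lambda>_. seqs n). \<Sum>zs\<in>seqs n.
        (\<Prod>m<M. iid_prob PX (xs m) * dmc_prob PYX (xs m) (ys m))
        * dmc_prob PZX (xs w) zs * (if g ys zs \<noteq> w then 1 else 0)) / real M"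

definition Mstar ::
  "'x pmf \<Rightarrow> ('x \<Rightarrow> 'y pmf) \<Rightarrow> ('x \<Rightarrow> 'z pmf) \<Rightarrow> nat \<Rightarrow> real \<Rightarrow> nat" where
  "Mstar PX PYX PZX n eps =
     Max {M. 1 \<le> M \<and> (\<exists>g. err_prob PX PYX PZX n M g \<le> eps)}"

definition PYZ :: "'x::finite pmf \<Rightarrow> ('x \<Rightarrow> 'y pmf) \<Rightarrow> ('x \<Rightarrow> 'z pmf) \<Rightarrow> 'y \<Rightarrow> 'z \<Rightarrow> real" where
  "PYZ PX PYX PZX y z = (\<Sum>x\<in>UNIV. pmf PX x * pmf (PYX x) y * pmf (PZX x) z)"

definition PY :: "'x::finite pmf \<Rightarrow> ('x \<Rightarrow> 'y pmf) \<Rightarrow> ('x \<Rightarrow> 'z::finite pmf) \<Rightarrow> 'y \<Rightarrow> real" where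
  "PY PX PYX PZX y = (\<Sum>z\<in>UNIV. PYZ PX PYX PZX y z)"

definition PZ :: "'x::finite pmf \<Rightarrow> ('x \<Rightarrow> 'y::finite pmf) \<Rightarrow> ('x \<Rightarrow> 'z pmf) \<Rightarrow> 'z \<Rightarrow> real" where
  "PZ PX PYX PZX z = (\<Sum>y\<in>UNIV. PYZ PX PYX PZX y z)"

definition info_dens :: "'x::finite pmf \<Rightarrow> ('x \<Rightarrow> 'y::finite pmf) \<Rightarrow> ('x \<Rightarrow> 'z::finite pmf) \<Rightarrow> 'y \<Rightarrow> 'z \<Rightarrow> real" where
  "info_dens PX PYX PZX y z =
     ln ((PYZ PX PYX PZX y z / PY PX PYX PZX y) / PZ PX PYX PZX z)"

definition mutual_info :: "'x::finite pmf \<Rightarrow> ('x \<Rightarrow> 'y::finite pmf) \<Rightarrow> ('x \<Rightarrow> 'z::finite pmf) \<Rightarrow> real" where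
  "mutual_info PX PYX PZX =
     (\<Sum>y\<in>UNIV. \<Sum>z\<in>UNIV. PYZ PX PYX PZX y z * info_dens PX PYX PZX y z)"

definition dispersion :: "'x::finite pmf \<Rightarrow> ('x \<Rightarrow> 'y::finite pmf) \<Rightarrow> ('x \<Rightarrow> 'z::finite pmf) \<Rightarrow> real" where
  "dispersion PX PYX PZX =
     (\<Sum>y\<in>UNIV. \<Sum>z\<in>UNIV. PYZ PX PYX PZX y z *
        (info_dens PX PYX PZX y z - mutual_info PX PYX PZX)\<^sup>2)"

end

theory Submission
  imports Defs
begin

(*
  Write F_n(t) for the probability that the n-letter information density i(Y^n; Z^n) is at most t.
  The threshold decoder that outputs the first item whose stored record passes the test
  i(Y^n(m); Z^n) > t has error at most F_n(t) + M e^(-t) for M items: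
  the true item fails the test with probability F_n(t), and each of the other M - 1 records,
  being independent of Z^n, passes it with probability at most e^(-t).  Conversely, for every
  decoder the success probability is at most 1 - F_n(t) + e^t / M, by comparing the joint law of
  the true record and Z^n with the product law on the event i <= t.  By the central limit theorem
  F_n(n I + a sqrt n) tends to Phi(a / sqrt V).  Choosing t = ln M +- delta sqrt n in the two bounds
  pins ln M*(n, eps) between n I + (sqrt V Phi^-1(eps) -+ 3 delta) sqrt n for all large n, so the
  normalised sequence converges to sqrt V Phi^-1(eps), and its liminf is this limit.
*)

section \<open>The standard Gaussian distribution function\<close>

lemma Phi_eq_cdf: "Phi = cdf std_normal_distribution"
  unfolding Phi_def by simp

interpretation std_normal: real_distribution std_normal_distribution
  by (rule real_dist_normal_dist)

lemma isCont_Phi: "isCont Phi x"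
proof -
  have "emeasure std_normal_distribution {x} = 0"
    by (subst emeasure_density) (auto intro!: nn_integral_null_set)
  then show ?thesis
    unfolding Phi_eq_cdf std_normal.isCont_cdf by (simp add: measure_def)
qed

lemma Phi_strict_mono:
  assumes "a < b"
  shows "Phi a < Phi b"
proof -
  \<comment> \<open>The density is bounded below by its value at the endpoint farther from 0.\<close>
  define m where "m = std_normal_density (max \<bar>a\<bar> \<bar>b\<bar>)"
  have "m > 0"
    unfolding m_def std_normal_density_def by simp
  have density_ge: "m \<le> std_normal_density x" if "x \<in> {a<..b}" for x
  proof -
    have "x\<^sup>2 \<le> (max \<bar>a\<bar> \<bar>b\<bar>)\<^sup>2"
      using that by (auto simp flip: abs_le_square_iff)
    then show ?thesis
      unfolding m_def std_normal_density_def by (intro mult_left_mono) auto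
  qed
  have "ennreal (m * (b - a)) = (\<integral>\<^sup>+ x. ennreal m * indicator {a<..b} x \<partial>lborel)"
    using assms \<open>m > 0\<close> by (simp add: nn_integral_cmult ennreal_mult)
  also have "\<dots> \<le> (\<integral>\<^sup>+ x. ennreal (std_normal_density x) * indicator {a<..b} x \<partial>lborel)"
    by (intro nn_integral_mono) (auto split: split_indicator intro: density_ge)
  also have "\<dots> = emeasure std_normal_distribution {a<..b}"
    by (subst emeasure_density) auto
  finally have "m * (b - a) \<le> measure std_normal_distribution {a<..b}"
    by (simp add: std_normal.emeasure_eq_measure)
  moreover have "m * (b - a) > 0"
    using \<open>m > 0\<close> assms by simp
  ultimately show ?thesis
    unfolding Phi_eq_cdf using std_normal.cdf_diff_eq[OF assms] by simp
qed

lemma Phi_Phi_inv: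
  assumes "0 < e" "e < 1"
  shows "Phi (Phi_inv e) = e"
proof -
  have "eventually (\<lambda>t. Phi t < e) at_bot"
    using std_normal.cdf_lim_at_bot assms unfolding Phi_eq_cdf by (intro order_tendstoD) auto
  then obtain a where a: "Phi a < e"
    by (auto simp: eventually_at_bot_linorder)
  have "eventually (\<lambda>t. Phi t > e \<and> t \<ge> a) at_top"
    using std_normal.cdf_lim_at_top_prob assms unfolding Phi_eq_cdf
    by (intro eventually_conj order_tendstoD eventually_ge_at_top) auto
  then obtain b where b: "Phi b > e" "b \<ge> a"
    by (auto simp: eventually_at_top_linorder)
  obtain t where t: "Phi t = e"
    using IVT[of Phi a e b] a b isCont_Phi by fastforce
  have "Phi_inv e = t"
    unfolding Phi_inv_def
  proof (rule the_equality)
    show "s = t" if "Phi s = e" for s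
      using Phi_strict_mono[of s t] Phi_strict_mono[of t s] that t by (cases s t rule: linorder_cases) auto
  qed (rule t)
  then show ?thesis
    using t by simp
qed

lemma finite_seqs [simp]: "finite (seqs n :: 'a::finite list set)"
  using finite_lists_length_eq[of "UNIV :: 'a set" n] by (simp add: seqs_def)

lemma seqs_0 [simp]: "seqs 0 = {[]}"
  unfolding seqs_def by auto

lemma mem_seqs_iff [simp]: "xs \<in> seqs n \<longleftrightarrow> length xs = n"
  unfolding seqs_def by simp

lemma sum_seqs_Suc:
  fixes f :: "'a::finite list \<Rightarrow> 'b::comm_monoid_add"
  shows "(\<Sum>xs\<in>seqs (Suc n). f xs) = (\<Sum>x\<in>UNIV. \<Sum>xs\<in>seqs n. f (x # xs))"
proof -
  have seqs_Suc: "seqs (Suc n) = (\<lambda>(x, xs). x # xs) ` (UNIV \<times> seqs n)"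
    by (auto simp: image_iff length_Suc_conv)
  have inj: "inj_on (\<lambda>(x, xs). x # xs) (UNIV \<times> seqs n)"
    by (auto simp: inj_on_def)
  have "(\<Sum>xs\<in>seqs (Suc n). f xs) = (\<Sum>p\<in>UNIV \<times> seqs n. f (fst p # snd p))"
    unfolding seqs_Suc sum.reindex[OF inj] by (intro sum.cong) auto
  then show ?thesis
    by (simp add: sum.cartesian_product case_prod_beta)
qed

lemma sum_seqs_prod_list:
  fixes f :: "'a::finite \<Rightarrow> real"
  shows "(\<Sum>xs\<in>seqs n. prod_list (map f xs)) = (\<Sum>x\<in>UNIV. f x) ^ n"
  by (induction n) (simp_all add: sum_seqs_Suc sum_distrib_right flip: sum_distrib_left)

lemma sum_seqs_prod_list_map2_left:
  fixes F :: "'a::finite \<Rightarrow> 'b \<Rightarrow> real"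
  assumes "length ys = n"
  shows "(\<Sum>xs\<in>seqs n. prod_list (map2 F xs ys)) = prod_list (map (\<lambda>y. \<Sum>x\<in>UNIV. F x y) ys)"
  using assms
proof (induction ys arbitrary: n)
  case (Cons y ys)
  then show ?case
    by (auto simp: sum_seqs_Suc sum_distrib_right simp flip: sum_distrib_left)
qed simp

lemma sum_seqs_prod_list_map2_right:
  fixes F :: "'a \<Rightarrow> 'b::finite \<Rightarrow> real"
  assumes "length xs = n"
  shows "(\<Sum>ys\<in>seqs n. prod_list (map2 F xs ys)) = prod_list (map (\<lambda>x. \<Sum>y\<in>UNIV. F x y) xs)"
  using assms
proof (induction xs arbitrary: n)
  case (Cons x xs)
  then show ?case
    by (auto simp: sum_seqs_Suc sum_distrib_right simp flip: sum_distrib_left)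
qed simp

lemma prod_list_map_nonneg: "(\<And>x. 0 \<le> f x) \<Longrightarrow> 0 \<le> prod_list (map f xs :: real list)"
  by (induction xs) auto

lemma prod_list_map2_map_upt:
  "prod_list (map2 F (map f [0..<n]) (map g [0..<n])) = (\<Prod>i<n. F (f i) (g i))"
  by (simp add: map2_map_map atLeast0LessThan flip: prod.distinct_set_conv_list)

lemma sum_list_map2_map_upt:
  "sum_list (map2 F (map f [0..<n]) (map g [0..<n])) = (\<Sum>i<n. F (f i) (g i))"
  by (simp add: map2_map_map atLeast0LessThan interv_sum_list_conv_sum_set_nat)

lemma sum_seqs_pairs_eq_sum_PiE:
  fixes h :: "'a::finite list \<Rightarrow> 'b::finite list \<Rightarrow> 'c::comm_monoid_add"
  shows "(\<Sum>ys\<in>seqs n. \<Sum>zs\<in>seqs n. h ys zs) =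
    (\<Sum>\<omega>\<in>PiE {..<n} (\<lambda>_. UNIV). h (map (fst \<circ> \<omega>) [0..<n]) (map (snd \<circ> \<omega>) [0..<n]))"
proof -
  have "(\<Sum>\<omega>\<in>PiE {..<n} (\<lambda>_. UNIV). h (map (fst \<circ> \<omega>) [0..<n]) (map (snd \<circ> \<omega>) [0..<n])) =
      (\<Sum>p\<in>seqs n \<times> seqs n. h (fst p) (snd p))"
    by (rule sum.reindex_bij_witness[where j = "\<lambda>\<omega>. (map (fst \<circ> \<omega>) [0..<n], map (snd \<circ> \<omega>) [0..<n])"
          and i = "\<lambda>p. \<lambda>k\<in>{..<n}. (fst p ! k, snd p ! k)"])
      (auto simp: PiE_iff extensional_def fun_eq_iff list_eq_iff_nth_eq)
  then show ?thesis
    by (simp add: sum.cartesian_product case_prod_beta)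
qed

lemma iid_prob_mult_dmc_prob:
  "length xs = length ys \<Longrightarrow>
    iid_prob P xs * dmc_prob W xs ys = prod_list (map2 (\<lambda>x y. pmf P x * pmf (W x) y) xs ys)"
  by (induction xs ys rule: list_induct2) (auto simp: iid_prob_def dmc_prob_def)

lemma iid_prob_mult_dmc_prob_mult_dmc_prob:
  "length xs = length ys \<Longrightarrow> length xs = length zs \<Longrightarrow>
    iid_prob P xs * dmc_prob W xs ys * dmc_prob V xs zs =
    prod_list (map2 (\<lambda>x (y, z). pmf P x * pmf (W x) y * pmf (V x) z) xs (zip ys zs))"
proof (induction xs arbitrary: ys zs)
  case (Cons x xs)
  then obtain y ys' z zs' where "ys = y # ys'" "zs = z # zs'"
    by (metis length_Suc_conv)
  with Cons show ?case
    by (simp add: iid_prob_def dmc_prob_def mult_ac)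
qed (simp add: iid_prob_def dmc_prob_def)

definition databases :: "nat \<Rightarrow> nat \<Rightarrow> (nat \<Rightarrow> 'a list) set" where
  "databases n M = PiE {..<M} (\<lambda>_. seqs n)"

lemma sum_databases_prod:
  fixes h :: "nat \<Rightarrow> 'a::finite list \<Rightarrow> real"
  shows "(\<Sum>ys\<in>databases n M. \<Prod>m<M. h m (ys m)) = (\<Prod>m<M. \<Sum>y\<in>seqs n. h m y)"
  unfolding databases_def by (rule prod_sum_PiE[symmetric]) auto

lemma Least_index_error_le:
  fixes M w :: nat
  assumes "w < M"
  shows "(if (LEAST m. m < M \<and> P m) \<noteq> w then 1 else 0 :: real) \<le>
    (if P w then 0 else 1) + (\<Sum>m\<in>{..<M} - {w}. if P m then 1 else 0)"
proof (cases "P w \<and> (\<forall>m\<in>{..<M} - {w}. \<not> P m)")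
  case True
  then have "(LEAST m. m < M \<and> P m) = w"
    using assms by (intro Least_equality) auto
  then show ?thesis
    by (simp add: sum_nonneg)
next
  case False
  then consider "\<not> P w" | m where "m \<in> {..<M} - {w}" "P m"
    by blast
  then show ?thesis
  proof cases
    case 2
    then have "(if P m then 1 else 0) \<le> (\<Sum>m\<in>{..<M} - {w}. if P m then 1 else 0 :: real)"
      by (intro member_le_sum) auto
    then show ?thesis
      using 2 by simp
  qed (simp add: sum_nonneg)
qed

section \<open>Infinite products of a finite distribution\<close>

lemma indep_vars_PiM_coordinates:
  assumes "prob_space M"
  shows "prob_space.indep_vars (PiM UNIV (\<lambda>_. M)) (\<lambda>_. M) (\<lambda>i \<omega>. \<omega> i) UNIV"
proof -
  interpret prob_space "PiM UNIV (\<lambda>_. M)"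
    using assms by (intro prob_space_PiM)
  have distr_coordinate: "distr (PiM UNIV (\<lambda>_. M)) M (\<lambda>\<omega>. \<omega> i) = M" for i
    using assms by (intro distr_PiM_component) auto
  show ?thesis
    by (subst indep_vars_iff_distr_eq_PiM') (simp_all add: restrict_UNIV distr_coordinate)
qed

lemma finite_subset_PiE_UNIV:
  "finite J \<Longrightarrow> A \<subseteq> PiE J (\<lambda>_. UNIV :: 'a::finite set) \<Longrightarrow> finite A"
  by (rule finite_subset) (auto intro: finite_PiE)

lemma sets_PiM_pmf_finite:
  fixes Q :: "'a::finite pmf"
  assumes "finite J" "A \<subseteq> PiE J (\<lambda>_. UNIV)"
  shows "A \<in> sets (PiM J (\<lambda>_. measure_pmf Q))"
proof -
  have "PiE J (\<lambda>i. {f i}) = {f}" if "f \<in> A" for f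
    using that assms(2) by (intro PiE_singleton) (auto simp: PiE_iff)
  then have "A = (\<Union>f\<in>A. PiE J (\<lambda>i. {f i}))"
    by simp
  also have "\<dots> \<in> sets (PiM J (\<lambda>_. measure_pmf Q))"
    using assms finite_subset_PiE_UNIV by (intro sets.finite_UN sets_PiM_I_finite) auto
  finally show ?thesis .
qed

lemma measure_PiM_pmf_finite:
  fixes Q :: "'a::finite pmf"
  assumes "finite J" "A \<subseteq> PiE J (\<lambda>_. UNIV)"
  shows "measure (PiM J (\<lambda>_. measure_pmf Q)) A = (\<Sum>f\<in>A. \<Prod>i\<in>J. pmf Q (f i))"
proof -
  interpret product_prob_space "\<lambda>_. measure_pmf Q" UNIV
    by (intro product_prob_spaceI prob_space_measure_pmf)
  interpret PJ: prob_space "PiM J (\<lambda>_. measure_pmf Q)"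
    by (intro prob_space_PiM prob_space_measure_pmf)
  have "finite A"
    using assms by (rule finite_subset_PiE_UNIV)
  have singleton_in_sets: "{f} \<in> sets (PiM J (\<lambda>_. measure_pmf Q))" if "f \<in> A" for f
    using that assms by (intro sets_PiM_pmf_finite) auto
  have "measure (PiM J (\<lambda>_. measure_pmf Q)) {f} = (\<Prod>i\<in>J. pmf Q (f i))" if "f \<in> A" for f
  proof -
    have "{f} = PiE J (\<lambda>i. {f i})"
      using that assms(2) by (intro PiE_singleton[symmetric]) (auto simp: PiE_iff)
    then have "emeasure (PiM J (\<lambda>_. measure_pmf Q)) {f} = (\<Prod>i\<in>J. emeasure (measure_pmf Q) {f i})"
      using assms(1) by (simp add: emeasure_PiM)
    then show ?thesis
      by (simp add: measure_def emeasure_pmf_single prod_ennreal prod_nonneg)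
  qed
  then show ?thesis
    using measure_eq_sum_singleton[OF \<open>finite A\<close> singleton_in_sets] PJ.emeasure_finite by simp
qed

lemma measure_PiM_pmf_sum_le:
  fixes Q :: "'a::finite pmf" and f :: "'a \<Rightarrow> real" and n :: nat
  defines "\<Omega> \<equiv> PiM UNIV (\<lambda>_. measure_pmf Q)"
  shows "measure \<Omega> {\<omega> \<in> space \<Omega>. (\<Sum>i<n. f (\<omega> i)) \<le> t} =
    (\<Sum>\<omega>\<in>PiE {..<n} (\<lambda>_. UNIV). (\<Prod>i<n. pmf Q (\<omega> i)) * (if (\<Sum>i<n. f (\<omega> i)) \<le> t then 1 else 0))"
proof -
  interpret product_prob_space "\<lambda>_. measure_pmf Q" UNIV
    by (intro product_prob_spaceI prob_space_measure_pmf)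
  define A where "A = {\<omega> \<in> PiE {..<n} (\<lambda>_. UNIV). (\<Sum>i<n. f (\<omega> i)) \<le> t}"
  have A_in_sets: "A \<in> sets (PiM {..<n} (\<lambda>_. measure_pmf Q))"
    by (intro sets_PiM_pmf_finite) (auto simp: A_def)
  have restrict_measurable: "(\<lambda>\<omega>. restrict \<omega> {..<n}) \<in> measurable \<Omega> (PiM {..<n} (\<lambda>_. measure_pmf Q))"
    unfolding \<Omega>_def by (rule measurable_restrict_subset) simp
  have "(\<lambda>\<omega>. restrict \<omega> {..<n}) -` A \<inter> space \<Omega> = {\<omega> \<in> space \<Omega>. (\<Sum>i<n. f (\<omega> i)) \<le> t}"
    by (auto simp: A_def)
  then have "measure \<Omega> {\<omega> \<in> space \<Omega>. (\<Sum>i<n. f (\<omega> i)) \<le> t} =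
      measure (distr \<Omega> (PiM {..<n} (\<lambda>_. measure_pmf Q)) (\<lambda>\<omega>. restrict \<omega> {..<n})) A"
    by (simp add: measure_distr[OF restrict_measurable A_in_sets])
  also have "\<dots> = (\<Sum>\<omega>\<in>A. \<Prod>i<n. pmf Q (\<omega> i))"
  proof -
    have "A \<subseteq> PiE {..<n} (\<lambda>_. UNIV)"
      by (auto simp: A_def)
    then show ?thesis
      unfolding \<Omega>_def by (simp add: distr_PiM_restrict_finite measure_PiM_pmf_finite)
  qed
  also have "\<dots> = (\<Sum>\<omega>\<in>PiE {..<n} (\<lambda>_. UNIV). (\<Prod>i<n. pmf Q (\<omega> i)) * (if (\<Sum>i<n. f (\<omega> i)) \<le> t then 1 else 0))"
    unfolding A_def by (simp add: sum.inter_filter[symmetric] finite_PiE if_distrib cong: if_cong)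
  finally show ?thesis .
qed

lemma cdf_normalized_sum:
  fixes X :: "nat \<Rightarrow> 'a \<Rightarrow> real"
  assumes "\<And>i. X i \<in> borel_measurable M" "\<sigma>2 > 0" "n \<ge> 1"
  shows "cdf (distr M borel (\<lambda>\<omega>. (\<Sum>i<n. X i \<omega> - \<mu>) / sqrt (real n * \<sigma>2))) a =
    measure M {\<omega> \<in> space M. (\<Sum>i<n. X i \<omega>) \<le> real n * \<mu> + a * sqrt (real n * \<sigma>2)}"
proof -
  have "sqrt (real n * \<sigma>2) > 0"
    using assms(2,3) by simp
  then have "(\<Sum>i<n. X i \<omega> - \<mu>) / sqrt (real n * \<sigma>2) \<le> a \<longleftrightarrow>
      (\<Sum>i<n. X i \<omega>) \<le> real n * \<mu> + a * sqrt (real n * \<sigma>2)" for \<omega>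
    by (simp add: divide_le_eq sum_subtractf algebra_simps)
  moreover have "(\<lambda>\<omega>. (\<Sum>i<n. X i \<omega> - \<mu>) / sqrt (real n * \<sigma>2)) \<in> borel_measurable M"
    using assms(1) by (intro borel_measurable_divide borel_measurable_sum borel_measurable_diff) simp_all
  ultimately show ?thesis
    unfolding cdf_def by (subst measure_distr) (auto intro!: arg_cong[where f = "measure M"])
qed

lemma clt_iid_pmf:
  fixes Q :: "'a::finite pmf" and f :: "'a \<Rightarrow> real"
  defines "\<Omega> \<equiv> PiM UNIV (\<lambda>_::nat. measure_pmf Q)"
  assumes mean: "(\<Sum>x\<in>UNIV. pmf Q x * f x) = \<mu>"
    and variance: "(\<Sum>x\<in>UNIV. pmf Q x * (f x - \<mu>)\<^sup>2) = \<sigma>2" and "\<sigma>2 > 0"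
  shows "(\<lambda>n. measure \<Omega> {\<omega> \<in> space \<Omega>. (\<Sum>i<n. f (\<omega> i)) \<le> real n * \<mu> + a * sqrt (real n * \<sigma>2)})
    \<longlonglongrightarrow> Phi a"
proof -
  interpret prob_space \<Omega>
    unfolding \<Omega>_def by (intro prob_space_PiM prob_space_measure_pmf)
  define X :: "nat \<Rightarrow> (nat \<Rightarrow> 'a) \<Rightarrow> real" where "X = (\<lambda>i \<omega>. f (\<omega> i))"
  have coordinate_measurable: "(\<lambda>\<omega>. \<omega> i) \<in> measurable \<Omega> (measure_pmf Q)" for i
    unfolding \<Omega>_def by simp
  have distr_coordinate: "distr \<Omega> (measure_pmf Q) (\<lambda>\<omega>. \<omega> i) = measure_pmf Q" for i
    unfolding \<Omega>_def by (intro distr_PiM_component prob_space_measure_pmf) auto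
  have expectation_X: "expectation (\<lambda>\<omega>. g (X i \<omega>)) = (\<Sum>x\<in>UNIV. pmf Q x * g (f x))" for g i
    using integral_distr[OF coordinate_measurable, of "\<lambda>x. g (f x)"]
    by (simp add: distr_coordinate X_def integral_measure_pmf_real[of UNIV] mult.commute)
  have "indep_vars (\<lambda>_. measure_pmf Q) (\<lambda>i \<omega>. \<omega> i) UNIV"
    unfolding \<Omega>_def by (intro indep_vars_PiM_coordinates prob_space_measure_pmf)
  then have X_indep: "indep_vars (\<lambda>_. borel) X UNIV"
    unfolding X_def by (rule indep_vars_compose2) simp
  have X_square_integrable: "integrable \<Omega> (\<lambda>\<omega>. (X i \<omega>)\<^sup>2)" for i
    using integrable_distr_eq[OF coordinate_measurable, of "\<lambda>x. (f x)\<^sup>2"]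
    by (simp add: distr_coordinate X_def integrable_measure_pmf_finite)
  have X_distr: "distr \<Omega> borel (X i) = distr (measure_pmf Q) borel f" for i
    using distr_distr[OF _ coordinate_measurable, of f borel i]
    by (simp add: distr_coordinate X_def comp_def)
  have "weak_conv_m (\<lambda>n. distr \<Omega> borel (\<lambda>\<omega>. (\<Sum>i<n. X i \<omega> - \<mu>) / sqrt (real n * (sqrt \<sigma>2)\<^sup>2)))
      std_normal_distribution"
    using \<open>\<sigma>2 > 0\<close> X_square_integrable X_distr expectation_X[of "\<lambda>x. x"] expectation_X[of "\<lambda>x. (x - \<mu>)\<^sup>2"]
    by (intro central_limit_theorem[OF X_indep]) (simp_all add: mean variance)
  then have cdf_limit: "(\<lambda>n. cdf (distr \<Omega> borel (\<lambda>\<omega>. (\<Sum>i<n. X i \<omega> - \<mu>) / sqrt (real n * \<sigma>2))) a)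
      \<longlonglongrightarrow> Phi a"
    using \<open>\<sigma>2 > 0\<close> isCont_Phi unfolding weak_conv_m_def weak_conv_def Phi_eq_cdf by simp
  have X_measurable: "X i \<in> borel_measurable \<Omega>" for i
    using measurable_compose[OF coordinate_measurable, of f borel] by (simp add: X_def)
  have "cdf (distr \<Omega> borel (\<lambda>\<omega>. (\<Sum>i<n. X i \<omega> - \<mu>) / sqrt (real n * \<sigma>2))) a =
      measure \<Omega> {\<omega> \<in> space \<Omega>. (\<Sum>i<n. f (\<omega> i)) \<le> real n * \<mu> + a * sqrt (real n * \<sigma>2)}"
    if "n \<ge> 1" for n
    using cdf_normalized_sum[OF X_measurable \<open>\<sigma>2 > 0\<close> that, where \<mu> = \<mu> and a = a] by (simp add: X_def)
  then have "eventually (\<lambda>n. cdf (distr \<Omega> borel (\<lambda>\<omega>. (\<Sum>i<n. X i \<omega> - \<mu>) / sqrt (real n * \<sigma>2))) a =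
      measure \<Omega> {\<omega> \<in> space \<Omega>. (\<Sum>i<n. f (\<omega> i)) \<le> real n * \<mu> + a * sqrt (real n * \<sigma>2)}) sequentially"
    by (intro eventually_sequentiallyI)
  then show ?thesis
    using cdf_limit by (rule Lim_transform_eventually[rotated])
qed

lemma filterlim_mult_sqrt_at_top:
  assumes "c > 0"
  shows "filterlim (\<lambda>n. c * sqrt (real n)) at_top sequentially"
  using assms filterlim_compose[OF sqrt_at_top filterlim_real_sequentially]
  by (intro filterlim_tendsto_pos_mult_at_top[OF tendsto_const])

lemma tendsto_exp_neg_mult_sqrt:
  assumes "c > 0"
  shows "(\<lambda>n. exp (- (c * sqrt (real n)))) \<longlonglongrightarrow> 0"
  using filterlim_mult_sqrt_at_top[OF assms]
  by (intro filterlim_compose[OF exp_at_bot]) (simp add: filterlim_uminus_at_top)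

section \<open>The joint law of stored records and observations\<close>

locale biometric_identification =
  fixes PX :: "'x::finite pmf" and PYX :: "'x \<Rightarrow> 'y::finite pmf" and PZX :: "'x \<Rightarrow> 'z::finite pmf"
begin

abbreviation "pyz \<equiv> PYZ PX PYX PZX"

abbreviation "py \<equiv> PY PX PYX PZX"

abbreviation "pz \<equiv> PZ PX PYX PZX"

abbreviation "idn \<equiv> info_dens PX PYX PZX"

abbreviation "MI \<equiv> mutual_info PX PYX PZX"

abbreviation "DV \<equiv> dispersion PX PYX PZX"

definition PYZ_pmf :: "('y \<times> 'z) pmf" where
  "PYZ_pmf = PX \<bind> (\<lambda>x. pair_pmf (PYX x) (PZX x))"

lemma pmf_PYZ_pmf: "pmf PYZ_pmf p = pyz (fst p) (snd p)"
  unfolding PYZ_pmf_def PYZ_def pmf_bind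
  by (cases p) (simp add: integral_measure_pmf_real[of UNIV] pmf_pair mult_ac)

lemma sum_PYZ_pmf: "(\<Sum>p\<in>UNIV. pmf PYZ_pmf p * h p) = (\<Sum>y\<in>UNIV. \<Sum>z\<in>UNIV. pyz y z * h (y, z))"
  by (simp add: pmf_PYZ_pmf sum.cartesian_product case_prod_beta flip: UNIV_Times_UNIV)

lemma pyz_nonneg [simp]: "pyz y z \<ge> 0"
  unfolding PYZ_def by (intro sum_nonneg) auto

lemma py_nonneg [simp]: "py y \<ge> 0"
  unfolding PY_def by (intro sum_nonneg) auto

lemma pz_nonneg [simp]: "pz z \<ge> 0"
  unfolding PZ_def by (intro sum_nonneg) auto

lemma sum_pyz: "(\<Sum>y\<in>UNIV. \<Sum>z\<in>UNIV. pyz y z) = 1"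
  using sum_PYZ_pmf[of "\<lambda>_. 1"] by (simp add: sum_pmf_eq_1)

lemma sum_py: "(\<Sum>y\<in>UNIV. py y) = 1"
  using sum_pyz by (simp add: PY_def)

lemma sum_pz: "(\<Sum>z\<in>UNIV. pz z) = 1"
  unfolding PZ_def using sum_pyz by (subst sum.swap)

lemma py_eq: "py y = (\<Sum>x\<in>UNIV. pmf PX x * pmf (PYX x) y)"
proof -
  have "py y = (\<Sum>x\<in>UNIV. pmf PX x * pmf (PYX x) y * (\<Sum>z\<in>UNIV. pmf (PZX x) z))"
    unfolding PY_def PYZ_def by (subst sum.swap) (simp add: sum_distrib_left)
  then show ?thesis
    by (simp add: sum_pmf_eq_1)
qed

lemma pyz_eq_exp_info_dens:
  assumes "pyz y z > 0"
  shows "pyz y z = exp (idn y z) * (py y * pz z)"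
proof -
  have "pyz y z \<le> py y" "pyz y z \<le> pz z"
    unfolding PY_def PZ_def by (rule member_le_sum; simp)+
  then have "py y > 0" "pz z > 0"
    using assms by linarith+
  then show ?thesis
    using assms by (simp add: info_dens_def)
qed

definition PYZn :: "'y list \<Rightarrow> 'z list \<Rightarrow> real" where
  "PYZn ys zs = prod_list (map2 pyz ys zs)"

definition PYn :: "'y list \<Rightarrow> real" where
  "PYn ys = prod_list (map py ys)"

definition PZn :: "'z list \<Rightarrow> real" where
  "PZn zs = prod_list (map pz zs)"

definition info_dens_n :: "'y list \<Rightarrow> 'z list \<Rightarrow> real" where
  "info_dens_n ys zs = sum_list (map2 idn ys zs)"

definition info_cdf :: "nat \<Rightarrow> real \<Rightarrow> real" where
  "info_cdf n t = (\<Sum>ys\<in>seqs n. \<Sum>zs\<in>seqs n. PYZn ys zs * (if info_dens_n ys zs \<le> t then 1 else 0))"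

lemma PYZn_nonneg [simp]: "PYZn ys zs \<ge> 0"
  unfolding PYZn_def by (induction ys zs rule: list_induct2') auto

lemma PYn_nonneg [simp]: "PYn ys \<ge> 0"
  unfolding PYn_def by (intro prod_list_map_nonneg) simp

lemma PZn_nonneg [simp]: "PZn zs \<ge> 0"
  unfolding PZn_def by (intro prod_list_map_nonneg) simp

lemma sum_PYZn_eq_PYn: "length ys = n \<Longrightarrow> (\<Sum>zs\<in>seqs n. PYZn ys zs) = PYn ys"
  unfolding PYZn_def PYn_def
  by (auto simp: sum_seqs_prod_list_map2_right PY_def intro!: arg_cong[where f = prod_list])

lemma sum_PYZn_eq_PZn: "length zs = n \<Longrightarrow> (\<Sum>ys\<in>seqs n. PYZn ys zs) = PZn zs"
  unfolding PYZn_def PZn_def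
  by (auto simp: sum_seqs_prod_list_map2_left PZ_def intro!: arg_cong[where f = prod_list])

lemma sum_PYn: "(\<Sum>ys\<in>seqs n. PYn ys) = 1"
  unfolding PYn_def sum_seqs_prod_list sum_py by simp

lemma sum_PZn: "(\<Sum>zs\<in>seqs n. PZn zs) = 1"
  unfolding PZn_def sum_seqs_prod_list sum_pz by simp

lemma sum_PYZn: "(\<Sum>ys\<in>seqs n. \<Sum>zs\<in>seqs n. PYZn ys zs) = 1"
  by (simp add: sum_PYZn_eq_PYn sum_PYn)

lemma PYZn_eq_exp_info_dens_n:
  "length ys = length zs \<Longrightarrow> PYZn ys zs > 0 \<Longrightarrow> PYZn ys zs = exp (info_dens_n ys zs) * (PYn ys * PZn zs)"
proof (induction ys zs rule: list_induct2)
  case (Cons y ys z zs)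
  then have "pyz y z > 0" "PYZn ys zs > 0"
    using pyz_nonneg[of y z] PYZn_nonneg[of ys zs] by (auto simp: PYZn_def zero_less_mult_iff)
  then have "PYZn (y # ys) (z # zs) = exp (idn y z) * (py y * pz z) * (exp (info_dens_n ys zs) * (PYn ys * PZn zs))"
    using Cons.IH pyz_eq_exp_info_dens by (simp add: PYZn_def)
  then show ?case
    by (simp add: info_dens_n_def PYn_def PZn_def exp_add mult_ac)
qed (simp add: PYZn_def info_dens_n_def PYn_def PZn_def)

lemma PYZn_le_exp_mult:
  assumes "length ys = length zs" "info_dens_n ys zs \<le> t"
  shows "PYZn ys zs \<le> exp t * (PYn ys * PZn zs)"
proof (cases "PYZn ys zs > 0")
  case True
  then have "PYZn ys zs = exp (info_dens_n ys zs) * (PYn ys * PZn zs)"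
    using PYZn_eq_exp_info_dens_n assms(1) by blast
  also have "\<dots> \<le> exp t * (PYn ys * PZn zs)"
    using assms(2) by (intro mult_right_mono) auto
  finally show ?thesis .
qed (use PYZn_nonneg[of ys zs] in simp)

lemma sum_iid_dmc_eq_PYn:
  assumes "length ys = n"
  shows "(\<Sum>xs\<in>seqs n. iid_prob PX xs * dmc_prob PYX xs ys) = PYn ys"
proof -
  have "(\<Sum>xs\<in>seqs n. iid_prob PX xs * dmc_prob PYX xs ys) =
      (\<Sum>xs\<in>seqs n. prod_list (map2 (\<lambda>x y. pmf PX x * pmf (PYX x) y) xs ys))"
    using assms by (intro sum.cong) (auto simp: iid_prob_mult_dmc_prob)
  also have "\<dots> = PYn ys"
    using assms by (auto simp: sum_seqs_prod_list_map2_left PYn_def py_eq intro!: arg_cong[where f = prod_list])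
  finally show ?thesis .
qed

lemma sum_iid_dmc_dmc_eq_PYZn:
  assumes "length ys = n" "length zs = n"
  shows "(\<Sum>xs\<in>seqs n. iid_prob PX xs * dmc_prob PYX xs ys * dmc_prob PZX xs zs) = PYZn ys zs"
proof -
  have "(\<Sum>xs\<in>seqs n. iid_prob PX xs * dmc_prob PYX xs ys * dmc_prob PZX xs zs) =
      (\<Sum>xs\<in>seqs n. prod_list (map2 (\<lambda>x (y, z). pmf PX x * pmf (PYX x) y * pmf (PZX x) z) xs (zip ys zs)))"
    using assms by (intro sum.cong) (auto simp: iid_prob_mult_dmc_prob_mult_dmc_prob)
  also have "\<dots> = PYZn ys zs"
    using assms by (subst sum_seqs_prod_list_map2_left) (auto simp: PYZn_def PYZ_def intro!: arg_cong[where f = prod_list])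
  finally show ?thesis .
qed

definition db_prob :: "nat \<Rightarrow> nat \<Rightarrow> (nat \<Rightarrow> 'y list) \<Rightarrow> 'z list \<Rightarrow> real" where
  "db_prob M w ys zs = (\<Prod>m\<in>{..<M} - {w}. PYn (ys m)) * PYZn (ys w) zs"

lemma db_prob_nonneg [simp]: "db_prob M w ys zs \<ge> 0"
  unfolding db_prob_def by (intro mult_nonneg_nonneg prod_nonneg) auto

lemma sum_features_eq_db_prob:
  assumes "w < M" "ys \<in> databases n M" "zs \<in> seqs n"
  shows "(\<Sum>xs\<in>databases n M. (\<Prod>m<M. iid_prob PX (xs m) * dmc_prob PYX (xs m) (ys m))
      * dmc_prob PZX (xs w) zs) = db_prob M w ys zs"
proof -
  define h where "h m x = iid_prob PX x * dmc_prob PYX x (ys m) * (if m = w then dmc_prob PZX x zs else 1)"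
    for m x
  have "(\<Prod>m<M. iid_prob PX (xs m) * dmc_prob PYX (xs m) (ys m)) * dmc_prob PZX (xs w) zs =
      (\<Prod>m<M. h m (xs m))" for xs
    unfolding h_def prod.distrib using assms(1) by (simp add: prod.delta)
  then have "(\<Sum>xs\<in>databases n M. (\<Prod>m<M. iid_prob PX (xs m) * dmc_prob PYX (xs m) (ys m))
      * dmc_prob PZX (xs w) zs) = (\<Prod>m<M. \<Sum>x\<in>seqs n. h m x)"
    by (simp add: sum_databases_prod)
  also have "\<dots> = (\<Prod>m<M. if m = w then PYZn (ys w) zs else PYn (ys m))"
    using assms(2,3)
    by (intro prod.cong refl) (auto simp: h_def databases_def PiE_iff sum_iid_dmc_eq_PYn sum_iid_dmc_dmc_eq_PYZn)
  also have "\<dots> = db_prob M w ys zs"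
    unfolding db_prob_def using assms(1) by (subst prod.remove[of _ w]) (auto intro!: prod.cong)
  finally show ?thesis .
qed

lemma err_prob_eq_db_prob:
  "err_prob PX PYX PZX n M g =
    (\<Sum>w<M. \<Sum>ys\<in>databases n M. \<Sum>zs\<in>seqs n. db_prob M w ys zs * (if g ys zs \<noteq> w then 1 else 0)) / real M"
proof -
  have "(\<Sum>xs\<in>databases n M. \<Sum>ys\<in>databases n M. \<Sum>zs\<in>seqs n.
        (\<Prod>m<M. iid_prob PX (xs m) * dmc_prob PYX (xs m) (ys m)) * dmc_prob PZX (xs w) zs
        * (if g ys zs \<noteq> w then 1 else 0)) =
      (\<Sum>ys\<in>databases n M. \<Sum>zs\<in>seqs n. db_prob M w ys zs * (if g ys zs \<noteq> w then 1 else 0))"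
    if "w < M" for w
    by (subst sum.swap, intro sum.cong refl, subst sum.swap)
      (simp add: sum_distrib_right[symmetric] sum_features_eq_db_prob that)
  then show ?thesis
    unfolding err_prob_def databases_def[symmetric] by simp
qed

lemma sum_db_prob_true_item:
  assumes "w < M"
  shows "(\<Sum>ys\<in>databases n M. \<Sum>zs\<in>seqs n. db_prob M w ys zs * \<phi> (ys w) zs) =
    (\<Sum>y\<in>seqs n. \<Sum>zs\<in>seqs n. PYZn y zs * \<phi> y zs)"
proof -
  define h where "h m y = (if m = w then (\<Sum>zs\<in>seqs n. PYZn y zs * \<phi> y zs) else PYn y)" for m y
  have "(\<Sum>zs\<in>seqs n. db_prob M w ys zs * \<phi> (ys w) zs) = (\<Prod>m<M. h m (ys m))" for ys
  proof -
    have "(\<Prod>m\<in>{..<M} - {w}. h m (ys m)) = (\<Prod>m\<in>{..<M} - {w}. PYn (ys m))"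
      by (intro prod.cong) (auto simp: h_def)
    then show ?thesis
      using assms by (simp add: prod.remove[of _ w] h_def db_prob_def sum_distrib_left mult_ac)
  qed
  then have "(\<Sum>ys\<in>databases n M. \<Sum>zs\<in>seqs n. db_prob M w ys zs * \<phi> (ys w) zs) =
      (\<Prod>m<M. \<Sum>y\<in>seqs n. h m y)"
    by (simp add: sum_databases_prod)
  also have "\<dots> = (\<Sum>y\<in>seqs n. h w y) * (\<Prod>m\<in>{..<M} - {w}. \<Sum>y\<in>seqs n. h m y)"
    using assms by (subst prod.remove[of _ w]) auto
  also have "(\<Prod>m\<in>{..<M} - {w}. \<Sum>y\<in>seqs n. h m y) = 1"
    by (intro prod.neutral) (auto simp: h_def sum_PYn)
  finally show ?thesis
    by (simp add: h_def)
qed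

lemma sum_db_prob_other_item:
  assumes "w < M" "m < M" "m \<noteq> w"
  shows "(\<Sum>ys\<in>databases n M. \<Sum>zs\<in>seqs n. db_prob M w ys zs * \<phi> (ys m) zs) =
    (\<Sum>zs\<in>seqs n. PZn zs * (\<Sum>y\<in>seqs n. PYn y * \<phi> y zs))"
proof -
  have "(\<Sum>ys\<in>databases n M. db_prob M w ys zs * \<phi> (ys m) zs) =
      PZn zs * (\<Sum>y\<in>seqs n. PYn y * \<phi> y zs)" if "zs \<in> seqs n" for zs
  proof -
    define h where "h m' y = (if m' = w then PYZn y zs else if m' = m then PYn y * \<phi> y zs else PYn y)"
      for m' y
    have remove_w_m: "(\<Prod>m'<M. f m') = f w * (f m * (\<Prod>m'\<in>{..<M} - {w} - {m}. f m'))" for f :: "nat \<Rightarrow> real"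
      using assms by (simp add: prod.remove[of _ w] prod.remove[of _ m])
    have "db_prob M w ys zs * \<phi> (ys m) zs = (\<Prod>m'<M. h m' (ys m'))" for ys
    proof -
      have "(\<Prod>m'\<in>{..<M} - {w} - {m}. h m' (ys m')) = (\<Prod>m'\<in>{..<M} - {w} - {m}. PYn (ys m'))"
        by (intro prod.cong) (auto simp: h_def)
      then show ?thesis
        using assms by (simp add: remove_w_m prod.remove[of "{..<M} - {w}" m] h_def db_prob_def mult_ac)
    qed
    then have "(\<Sum>ys\<in>databases n M. db_prob M w ys zs * \<phi> (ys m) zs) = (\<Prod>m'<M. \<Sum>y\<in>seqs n. h m' y)"
      by (simp add: sum_databases_prod)
    also have "(\<Prod>m'\<in>{..<M} - {w} - {m}. \<Sum>y\<in>seqs n. h m' y) = 1"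
      by (intro prod.neutral) (auto simp: h_def sum_PYn)
    then have "(\<Prod>m'<M. \<Sum>y\<in>seqs n. h m' y) = PZn zs * (\<Sum>y\<in>seqs n. PYn y * \<phi> y zs)"
      using that assms by (simp add: remove_w_m h_def sum_PYZn_eq_PZn)
    finally show ?thesis .
  qed
  then show ?thesis
    by (subst sum.swap) simp
qed

section \<open>One-shot converse and achievability bounds\<close>

lemma db_prob_le_product:
  assumes "w < M" "ys \<in> databases n M" "zs \<in> seqs n" "info_dens_n (ys w) zs \<le> t"
  shows "db_prob M w ys zs \<le> exp t * ((\<Prod>m<M. PYn (ys m)) * PZn zs)"
proof -
  have "length (ys w) = length zs"
    using assms(1-3) by (auto simp: databases_def PiE_iff)
  then have "db_prob M w ys zs \<le> (\<Prod>m\<in>{..<M} - {w}. PYn (ys m)) * (exp t * (PYn (ys w) * PZn zs))"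
    unfolding db_prob_def using assms(4) by (intro mult_left_mono prod_nonneg PYZn_le_exp_mult) auto
  also have "\<dots> = exp t * ((\<Prod>m<M. PYn (ys m)) * PZn zs)"
    using assms(1) by (simp add: prod.remove[of _ w] mult_ac)
  finally show ?thesis .
qed

lemma sum_product_decoded_le_1:
  "(\<Sum>w<M. \<Sum>ys\<in>databases n M. \<Sum>zs\<in>seqs n.
      (\<Prod>m<M. PYn (ys m)) * PZn zs * (if g ys zs = w then 1 else 0)) \<le> 1"
proof -
  have "(\<Sum>w<M. \<Sum>ys\<in>databases n M. \<Sum>zs\<in>seqs n.
      (\<Prod>m<M. PYn (ys m)) * PZn zs * (if g ys zs = w then 1 else 0)) =
      (\<Sum>ys\<in>databases n M. \<Sum>zs\<in>seqs n. (\<Prod>m<M. PYn (ys m)) * PZn zs * (if g ys zs < M then 1 else 0))"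
    by (simp add: sum.swap[where A = "{..<M}"] flip: sum_distrib_left)
  also have "\<dots> \<le> (\<Sum>ys\<in>databases n M. \<Sum>zs\<in>seqs n. (\<Prod>m<M. PYn (ys m)) * PZn zs)"
    by (intro sum_mono) (simp add: prod_nonneg)
  also have "\<dots> = 1"
    by (simp add: sum_PZn sum_databases_prod[where h = "\<lambda>_. PYn"] sum_PYn
        flip: sum_distrib_left sum_distrib_right)
  finally show ?thesis .
qed

lemma err_prob_ge:
  assumes "M \<ge> 1"
  shows "info_cdf n t - exp t / real M \<le> err_prob PX PYX PZX n M g"
proof -
  let ?ind = "\<lambda>b. if b then 1 else 0 :: real"
  let ?P = "\<lambda>ys zs. (\<Prod>m<M. PYn (ys m)) * PZn zs"
  have pointwise: "db_prob M w ys zs * ?ind (info_dens_n (ys w) zs \<le> t) \<le>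
      exp t * (?P ys zs * ?ind (g ys zs = w)) + db_prob M w ys zs * ?ind (g ys zs \<noteq> w)"
    if "w < M" "ys \<in> databases n M" "zs \<in> seqs n" for w ys zs
    using db_prob_le_product[OF that, of t] by (auto intro!: mult_nonneg_nonneg prod_nonneg)
  have true_item: "(\<Sum>ys\<in>databases n M. \<Sum>zs\<in>seqs n. db_prob M w ys zs * ?ind (info_dens_n (ys w) zs \<le> t)) =
      info_cdf n t" if "w < M" for w
    using sum_db_prob_true_item[OF that, where \<phi> = "\<lambda>y zs. ?ind (info_dens_n y zs \<le> t)"]
    by (simp add: info_cdf_def)
  have err: "real M * err_prob PX PYX PZX n M g =
      (\<Sum>w<M. \<Sum>ys\<in>databases n M. \<Sum>zs\<in>seqs n. db_prob M w ys zs * ?ind (g ys zs \<noteq> w))"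
    using assms by (simp add: err_prob_eq_db_prob)
  have "real M * info_cdf n t =
      (\<Sum>w<M. \<Sum>ys\<in>databases n M. \<Sum>zs\<in>seqs n. db_prob M w ys zs * ?ind (info_dens_n (ys w) zs \<le> t))"
    by (simp add: true_item)
  also have "\<dots> \<le> (\<Sum>w<M. \<Sum>ys\<in>databases n M. \<Sum>zs\<in>seqs n.
      exp t * (?P ys zs * ?ind (g ys zs = w)) + db_prob M w ys zs * ?ind (g ys zs \<noteq> w))"
    by (intro sum_mono pointwise) auto
  also have "\<dots> = exp t * (\<Sum>w<M. \<Sum>ys\<in>databases n M. \<Sum>zs\<in>seqs n. ?P ys zs * ?ind (g ys zs = w))
      + real M * err_prob PX PYX PZX n M g"
    unfolding err by (simp add: sum.distrib sum_distrib_left)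
  also have "\<dots> \<le> exp t + real M * err_prob PX PYX PZX n M g"
    using sum_product_decoded_le_1[of M g n] by simp
  finally show ?thesis
    using assms by (simp add: field_simps)
qed

text \<open>If no index passes the test, LEAST returns an unspecified value; the error
  analysis counts such outcomes as errors.\<close>
definition threshold_decoder :: "nat \<Rightarrow> real \<Rightarrow> (nat \<Rightarrow> 'y list) \<Rightarrow> 'z list \<Rightarrow> nat" where
  "threshold_decoder M t ys zs = (LEAST m. m < M \<and> exp t * (PYn (ys m) * PZn zs) < PYZn (ys m) zs)"

lemma missed_detection_le:
  assumes "length y = length zs"
  shows "PYZn y zs * (if exp t * (PYn y * PZn zs) < PYZn y zs then 0 else 1) \<le>
    PYZn y zs * (if info_dens_n y zs \<le> t then 1 else 0)"
proof (cases "PYZn y zs > 0")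
  case True
  have "PYZn y zs = exp (info_dens_n y zs) * (PYn y * PZn zs)"
    using assms True by (rule PYZn_eq_exp_info_dens_n)
  moreover from this True have "PYn y * PZn zs > 0"
    by (metis PYn_nonneg PZn_nonneg mult_nonneg_nonneg mult_zero_right order_less_le)
  ultimately show ?thesis
    by (auto simp: mult_less_cancel_right_pos)
qed (use PYZn_nonneg[of y zs] in auto)

lemma false_alarm_le:
  "PYn y * PZn zs * (if exp t * (PYn y * PZn zs) < PYZn y zs then 1 else 0) \<le> exp (- t) * PYZn y zs"
  by (auto simp: exp_minus field_simps)

lemma err_prob_threshold_decoder_le:
  assumes "M \<ge> 1"
  shows "err_prob PX PYX PZX n M (threshold_decoder M t) \<le> info_cdf n t + real M * exp (- t)"
proof -
  let ?pass = "\<lambda>y zs. exp t * (PYn y * PZn zs) < PYZn y zs"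
  let ?miss_sum = "\<lambda>w. \<Sum>ys\<in>databases n M. \<Sum>zs\<in>seqs n. db_prob M w ys zs * (if ?pass (ys w) zs then 0 else 1)"
  let ?alarm_sum = "\<lambda>w m. \<Sum>ys\<in>databases n M. \<Sum>zs\<in>seqs n. db_prob M w ys zs * (if ?pass (ys m) zs then 1 else 0)"
  have missed: "?miss_sum w \<le> info_cdf n t" if "w < M" for w
    unfolding sum_db_prob_true_item[OF that, where \<phi> = "\<lambda>y zs. if ?pass y zs then 0 else 1"] info_cdf_def
    by (intro sum_mono missed_detection_le) simp
  have false_alarm: "?alarm_sum w m \<le> exp (- t)" if "w < M" "m < M" "m \<noteq> w" for w m
  proof -
    have "?alarm_sum w m \<le> (\<Sum>zs\<in>seqs n. \<Sum>y\<in>seqs n. exp (- t) * PYZn y zs)"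
      unfolding sum_db_prob_other_item[OF that, where \<phi> = "\<lambda>y zs. if ?pass y zs then 1 else 0"]
        sum_distrib_left
      by (intro sum_mono) (use false_alarm_le in \<open>simp add: mult_ac\<close>)
    also have "\<dots> = exp (- t)"
      by (subst sum.swap) (simp add: sum_PYZn flip: sum_distrib_left)
    finally show ?thesis .
  qed
  have "real M * err_prob PX PYX PZX n M (threshold_decoder M t) \<le>
      (\<Sum>w<M. \<Sum>ys\<in>databases n M. \<Sum>zs\<in>seqs n. db_prob M w ys zs *
        ((if ?pass (ys w) zs then 0 else 1) + (\<Sum>m\<in>{..<M} - {w}. if ?pass (ys m) zs then 1 else 0)))"
    using assms unfolding err_prob_eq_db_prob threshold_decoder_def
    by (auto intro!: sum_mono mult_left_mono Least_index_error_le)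
  also have "\<dots> = (\<Sum>w<M. ?miss_sum w + (\<Sum>m\<in>{..<M} - {w}. ?alarm_sum w m))"
    by (simp add: distrib_left sum.distrib sum_distrib_left sum.swap[where A = "{..<M} - _"])
  also have "\<dots> \<le> (\<Sum>w<M. info_cdf n t + real M * exp (- t))"
  proof (intro sum_mono add_mono)
    fix w assume "w \<in> {..<M}"
    then have "(\<Sum>m\<in>{..<M} - {w}. ?alarm_sum w m) \<le> (\<Sum>m\<in>{..<M} - {w}. exp (- t))"
      by (intro sum_mono false_alarm) auto
    also have "\<dots> \<le> real M * exp (- t)"
      by (simp add: card_Diff_singleton_if)
    finally show "(\<Sum>m\<in>{..<M} - {w}. ?alarm_sum w m) \<le> real M * exp (- t)" .
  qed (use missed in auto)
  finally show ?thesis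
    using assms by simp
qed

section \<open>Asymptotics of the optimal number of items\<close>

lemma info_cdf_mono: "s \<le> t \<Longrightarrow> info_cdf n s \<le> info_cdf n t"
  unfolding info_cdf_def by (intro sum_mono mult_left_mono) auto

lemma info_cdf_eq_measure:
  "info_cdf n t = measure (PiM UNIV (\<lambda>_. measure_pmf PYZ_pmf))
    {\<omega> \<in> space (PiM UNIV (\<lambda>_. measure_pmf PYZ_pmf)). (\<Sum>i<n. idn (fst (\<omega> i)) (snd (\<omega> i))) \<le> t}"
proof -
  have "info_cdf n t = (\<Sum>\<omega>\<in>PiE {..<n} (\<lambda>_. UNIV).
      (\<Prod>i<n. pmf PYZ_pmf (\<omega> i)) * (if (\<Sum>i<n. idn (fst (\<omega> i)) (snd (\<omega> i))) \<le> t then 1 else 0))"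
    unfolding info_cdf_def sum_seqs_pairs_eq_sum_PiE
    by (simp add: PYZn_def info_dens_n_def prod_list_map2_map_upt sum_list_map2_map_upt pmf_PYZ_pmf)
  then show ?thesis
    by (simp add: measure_PiM_pmf_sum_le[where f = "\<lambda>p. idn (fst p) (snd p)"])
qed

lemma info_cdf_clt:
  assumes "DV > 0"
  shows "(\<lambda>n. info_cdf n (real n * MI + a * sqrt (real n))) \<longlonglongrightarrow> Phi (a / sqrt DV)"
proof -
  have "a / sqrt DV * sqrt (real n * DV) = a * sqrt (real n)" for n
    using assms by (simp add: real_sqrt_mult)
  then show ?thesis
    using clt_iid_pmf[of PYZ_pmf "\<lambda>p. idn (fst p) (snd p)" MI DV "a / sqrt DV"] assms
    by (simp add: info_cdf_eq_measure sum_PYZ_pmf mutual_info_def dispersion_def)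
qed

lemma finite_feasible_sizes:
  assumes "eps < 1"
  shows "finite {M. 1 \<le> M \<and> (\<exists>g. err_prob PX PYX PZX n M g \<le> eps)}"
proof -
  define t where "t = Max ((\<lambda>(ys, zs). info_dens_n ys zs) ` (seqs n \<times> seqs n))"
  have "info_dens_n ys zs \<le> t" if "ys \<in> seqs n" "zs \<in> seqs n" for ys zs
    unfolding t_def using that by (intro Max_ge) auto
  then have "info_cdf n t = (\<Sum>ys\<in>seqs n. \<Sum>zs\<in>seqs n. PYZn ys zs)"
    unfolding info_cdf_def by (intro sum.cong) auto
  then have "info_cdf n t = 1"
    by (simp add: sum_PYZn)
  have "M \<le> nat \<lceil>exp t / (1 - eps)\<rceil>" if "M \<ge> 1" "err_prob PX PYX PZX n M g \<le> eps" for M g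
  proof -
    have "1 - exp t / real M \<le> eps"
      using err_prob_ge[OF that(1), of n t g] that(2) \<open>info_cdf n t = 1\<close> by simp
    then have "real M \<le> exp t / (1 - eps)"
      using that(1) assms by (simp add: field_simps)
    then have "real M \<le> real (nat \<lceil>exp t / (1 - eps)\<rceil>)"
      by linarith
    then show ?thesis
      by simp
  qed
  then show ?thesis
    by (intro finite_subset[OF _ finite_atMost[of "nat \<lceil>exp t / (1 - eps)\<rceil>"]]) auto
qed

lemma
  assumes "0 \<le> eps" "eps < 1"
  shows Mstar_feasible: "Mstar PX PYX PZX n eps \<ge> 1 \<and> (\<exists>g. err_prob PX PYX PZX n (Mstar PX PYX PZX n eps) g \<le> eps)"
    and le_Mstar: "M \<ge> 1 \<Longrightarrow> err_prob PX PYX PZX n M g \<le> eps \<Longrightarrow> M \<le> Mstar PX PYX PZX n eps"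
proof -
  let ?S = "{M. 1 \<le> M \<and> (\<exists>g. err_prob PX PYX PZX n M g \<le> eps)}"
  have "err_prob PX PYX PZX n 1 (\<lambda>_ _. 0) = 0"
    by (simp add: err_prob_eq_db_prob)
  then have "1 \<in> ?S"
    using assms(1) by (auto intro!: exI[of _ "\<lambda>_ _. 0"])
  moreover have fin: "finite ?S"
    using finite_feasible_sizes[OF assms(2)] .
  ultimately show "Mstar PX PYX PZX n eps \<ge> 1 \<and> (\<exists>g. err_prob PX PYX PZX n (Mstar PX PYX PZX n eps) g \<le> eps)"
    using Max_in[OF fin] unfolding Mstar_def by auto
  show "M \<ge> 1 \<Longrightarrow> err_prob PX PYX PZX n M g \<le> eps \<Longrightarrow> M \<le> Mstar PX PYX PZX n eps"
    unfolding Mstar_def by (intro Max_ge[OF fin]) auto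
qed

lemma ln_Mstar_ge:
  assumes "0 \<le> eps" "eps < 1" "info_cdf n (u + \<gamma>) + exp (- \<gamma>) \<le> eps"
  shows "u - ln 2 \<le> ln (real (Mstar PX PYX PZX n eps))"
proof (cases "u < ln 2")
  case True
  have "0 \<le> ln (real (Mstar PX PYX PZX n eps))"
    using Mstar_feasible[OF assms(1,2), of n] by simp
  then show ?thesis
    using True by linarith
next
  case False
  define M where "M = nat \<lfloor>exp u\<rfloor>"
  have "exp u \<ge> 2"
    using False by (metis exp_ln exp_le_cancel_iff not_less zero_less_numeral)
  then have M: "M \<ge> 1" "real M \<le> exp u" "exp u / 2 \<le> real M"
    unfolding M_def by linarith+
  have "ln (real M) \<le> u"
    using ln_mono[OF M(2)] M(1) by simp
  have "u - ln 2 = ln (exp u / 2)"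
    by (simp add: ln_divide_pos)
  also have "\<dots> \<le> ln (real M)"
    using M(3) by (intro ln_mono) auto
  finally have "u - ln 2 \<le> ln (real M)" .
  have "real M * exp (- (ln (real M) + \<gamma>)) = exp (- \<gamma>)"
    using M(1) by (simp add: exp_diff exp_minus field_simps)
  then have "err_prob PX PYX PZX n M (threshold_decoder M (ln (real M) + \<gamma>)) \<le>
      info_cdf n (ln (real M) + \<gamma>) + exp (- \<gamma>)"
    using err_prob_threshold_decoder_le[OF M(1), of n "ln (real M) + \<gamma>"] by simp
  also have "\<dots> \<le> eps"
    using assms(3) info_cdf_mono[of "ln (real M) + \<gamma>" "u + \<gamma>" n] \<open>ln (real M) \<le> u\<close> by simp
  finally have "M \<le> Mstar PX PYX PZX n eps"
    using le_Mstar[OF assms(1,2) M(1)] by blast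
  then have "ln (real M) \<le> ln (real (Mstar PX PYX PZX n eps))"
    using M(1) by (intro ln_mono) auto
  then show ?thesis
    using \<open>u - ln 2 \<le> ln (real M)\<close> by linarith
qed

lemma ln_Mstar_less:
  assumes "0 \<le> eps" "eps < 1" "eps + exp (- \<gamma>) < info_cdf n u"
  shows "ln (real (Mstar PX PYX PZX n eps)) < u + \<gamma>"
proof (rule ccontr)
  let ?M = "Mstar PX PYX PZX n eps"
  assume "\<not> ln (real ?M) < u + \<gamma>"
  then have "info_cdf n u \<le> info_cdf n (ln (real ?M) - \<gamma>)"
    by (intro info_cdf_mono) simp
  moreover obtain g where "?M \<ge> 1" "err_prob PX PYX PZX n ?M g \<le> eps"
    using Mstar_feasible[OF assms(1,2)] by blast
  moreover have "exp (ln (real ?M) - \<gamma>) / real ?M = exp (- \<gamma>)"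
    using \<open>?M \<ge> 1\<close> by (simp add: exp_diff exp_minus field_simps)
  ultimately show False
    using err_prob_ge[of ?M n "ln (real ?M) - \<gamma>" g] assms(3) by simp
qed

lemma eventually_normalized_ln_Mstar_gt:
  assumes "0 < eps" "eps < 1" "DV > 0" "b < sqrt DV * Phi_inv eps"
  shows "eventually (\<lambda>n. b < (ln (real (Mstar PX PYX PZX n eps)) - real n * MI) / sqrt (real n))
    sequentially"
proof -
  let ?L = "sqrt DV * Phi_inv eps"
  define \<delta> where "\<delta> = (?L - b) / 4"
  have "\<delta> > 0"
    using assms(4) by (simp add: \<delta>_def)
  then have "(?L - \<delta>) / sqrt DV < Phi_inv eps"
    using assms(3) by (simp add: field_simps)
  then have "Phi ((?L - \<delta>) / sqrt DV) < eps"
    using Phi_strict_mono Phi_Phi_inv[OF assms(1,2)] by metis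
  moreover have "(\<lambda>n. info_cdf n (real n * MI + (?L - \<delta>) * sqrt (real n))
      + exp (- (\<delta> * sqrt (real n)))) \<longlonglongrightarrow> Phi ((?L - \<delta>) / sqrt DV)"
    using tendsto_add[OF info_cdf_clt[OF assms(3)] tendsto_exp_neg_mult_sqrt[OF \<open>\<delta> > 0\<close>]] by simp
  ultimately have "eventually (\<lambda>n. info_cdf n (real n * MI + (?L - \<delta>) * sqrt (real n))
      + exp (- (\<delta> * sqrt (real n))) < eps) sequentially"
    by (simp add: order_tendstoD)
  moreover have "eventually (\<lambda>n. ln 2 \<le> \<delta> * sqrt (real n)) sequentially"
    using filterlim_mult_sqrt_at_top[OF \<open>\<delta> > 0\<close>] by (simp add: filterlim_at_top)
  ultimately show ?thesis
    using eventually_gt_at_top[of 0]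
  proof eventually_elim
    case (elim n)
    have "real n * MI + (?L - 2 * \<delta>) * sqrt (real n) - ln 2 \<le> ln (real (Mstar PX PYX PZX n eps))"
      using elim(1) assms by (intro ln_Mstar_ge[where \<gamma> = "\<delta> * sqrt (real n)"]) (auto simp: algebra_simps)
    then have "(?L - 3 * \<delta>) * sqrt (real n) \<le> ln (real (Mstar PX PYX PZX n eps)) - real n * MI"
      using elim(2) by (simp add: algebra_simps)
    moreover have "b * sqrt (real n) < (?L - 3 * \<delta>) * sqrt (real n)"
      using elim(3) assms(4) by (intro mult_strict_right_mono) (simp_all add: \<delta>_def field_simps)
    ultimately have "b * sqrt (real n) < ln (real (Mstar PX PYX PZX n eps)) - real n * MI"
      by linarith
    then show ?case
      using elim(3) by (simp add: less_divide_eq)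
  qed
qed

lemma eventually_normalized_ln_Mstar_less:
  assumes "0 < eps" "eps < 1" "DV > 0" "sqrt DV * Phi_inv eps < b"
  shows "eventually (\<lambda>n. (ln (real (Mstar PX PYX PZX n eps)) - real n * MI) / sqrt (real n) < b)
    sequentially"
proof -
  let ?L = "sqrt DV * Phi_inv eps"
  define \<delta> where "\<delta> = (b - ?L) / 3"
  have "\<delta> > 0"
    using assms(4) by (simp add: \<delta>_def)
  then have "Phi_inv eps < (?L + \<delta>) / sqrt DV"
    using assms(3) by (simp add: field_simps)
  then have "eps < Phi ((?L + \<delta>) / sqrt DV)"
    using Phi_strict_mono Phi_Phi_inv[OF assms(1,2)] by metis
  moreover have "(\<lambda>n. info_cdf n (real n * MI + (?L + \<delta>) * sqrt (real n))
      - exp (- (\<delta> * sqrt (real n)))) \<longlonglongrightarrow> Phi ((?L + \<delta>) / sqrt DV)"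
    using tendsto_diff[OF info_cdf_clt[OF assms(3)] tendsto_exp_neg_mult_sqrt[OF \<open>\<delta> > 0\<close>]] by simp
  ultimately have "eventually (\<lambda>n. eps < info_cdf n (real n * MI + (?L + \<delta>) * sqrt (real n))
      - exp (- (\<delta> * sqrt (real n)))) sequentially"
    by (simp add: order_tendstoD)
  then show ?thesis
    using eventually_gt_at_top[of 0]
  proof eventually_elim
    case (elim n)
    have "ln (real (Mstar PX PYX PZX n eps)) < real n * MI + (?L + \<delta>) * sqrt (real n) + \<delta> * sqrt (real n)"
      using elim(1) assms by (intro ln_Mstar_less) auto
    moreover have "(?L + 2 * \<delta>) * sqrt (real n) \<le> b * sqrt (real n)"
      using assms(4) by (intro mult_right_mono) (simp_all add: \<delta>_def field_simps)
    ultimately have "ln (real (Mstar PX PYX PZX n eps)) - real n * MI < b * sqrt (real n)"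
      by (simp add: algebra_simps)
    then show ?case
      using elim(2) by (simp add: divide_less_eq)
  qed
qed

lemma normalized_ln_Mstar_tendsto:
  assumes "0 < eps" "eps < 1" "DV > 0"
  shows "(\<lambda>n. (ln (real (Mstar PX PYX PZX n eps)) - real n * MI) / sqrt (real n))
    \<longlonglongrightarrow> sqrt DV * Phi_inv eps"
  using eventually_normalized_ln_Mstar_gt[OF assms] eventually_normalized_ln_Mstar_less[OF assms]
  by (rule order_tendstoI)

end

theorem theorem8:
  fixes PX :: "'x::finite pmf" and PYX :: "'x \<Rightarrow> 'y::finite pmf"
    and PZX :: "'x \<Rightarrow> 'z::finite pmf" and eps :: real
  assumes "0 < eps" and "eps < 1"
    and "dispersion PX PYX PZX > 0"
  shows "liminf (\<lambda>n. ereal ((ln (real (Mstar PX PYX PZX n eps))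
                    - real n * mutual_info PX PYX PZX) / sqrt (real n)))
         = ereal (sqrt (dispersion PX PYX PZX) * Phi_inv eps)"
proof -
  interpret biometric_identification PX PYX PZX .
  show ?thesis
    using normalized_ln_Mstar_tendsto[OF assms] by (intro lim_imp_Liminf) (simp_all add: lim_ereal)
qed

end
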